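(* Let $W \in \mathcal{D}_1$. Then $L(LWR)^{-1}R \in \mathcal{D}_1$, and $R$ is a prefix of $L(LWR)^{-1}R$, i.e. $L(LWR)^{-1}R = RU$ for some $U \in \mathcal{D}_1$.
   Context: $L = \begin{pmatrix} 1 & 0 \\ 1 & 1\end{pmatrix}$ and $R = \begin{pmatrix} 1 & 1 \\ 0 & 1\end{pmatrix}$. $\mathcal{D}_1$ denotes the set of $2\times 2$ matrices with nonnegative integer entries and determinant $1$. The map sending a finite word over the alphabet $\{L,R\}$ to the product of the corresponding matrices is an isomorphism of the free monoid $\{L,R\}^*$ onto $\mathcal{D}_1$ (the empty word maps to the identity), so elements of $\mathcal{D}_1$ are identified with words over $\{L,R\}$; "prefix" refers to this word representation. *)

theory Defs
  imports "HOL-Analysis.Analysis"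
begin

definition Lm :: "int^2^2" where
  "Lm = vector [vector [1, 0], vector [1, 1]]"

definition Rm :: "int^2^2" where
  "Rm = vector [vector [1, 1], vector [0, 1]]"

definition D1 :: "(int^2^2) set" where
  "D1 = {M. (\<forall>i j. 0 \<le> M $ i $ j) \<and> det M = 1}"

end

theory Submission
  imports Defs
begin

text \<open>For \<open>det W = 1\<close> one has the identity \<open>L (L W R)\<inverse> R = R W\<^sup>T L\<close>: with
  \<open>S = [[0,1],[-1,0]]\<close> every \<open>M\<close> of determinant 1 satisfies \<open>M\<inverse> = S M\<^sup>T S\<inverse>\<close>, and
  \<open>L R\<inverse> S = R\<close>, \<open>S\<inverse> L\<inverse> R = L\<close>. Since \<open>\<D>\<^sub>1\<close> is a monoid closed under transposition,
  \<open>U = W\<^sup>T L\<close> lies in \<open>\<D>\<^sub>1\<close>.\<close>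

lemma matrix_inv_eqI:
  fixes A :: "'a::semiring_1^'n^'m" and B :: "'a^'m^'n"
  assumes "A ** B = mat 1" "B ** A = mat 1"
  shows "matrix_inv A = B"
proof -
  have inv: "A ** matrix_inv A = mat 1 \<and> matrix_inv A ** A = mat 1"
    unfolding matrix_inv_def by (rule someI[of _ B]) (simp add: assms)
  have "matrix_inv A = matrix_inv A ** (A ** B)" using assms by simp
  also have "\<dots> = B" using inv by (simp add: matrix_mul_assoc)
  finally show ?thesis .
qed

definition mat2 :: "'a::zero \<Rightarrow> 'a \<Rightarrow> 'a \<Rightarrow> 'a \<Rightarrow> 'a^2^2" where
  "mat2 a b c d = vector [vector [a, b], vector [c, d]]"

lemma mat2_nth [simp]:
  "mat2 a b c d $ 1 $ 1 = a" "mat2 a b c d $ 1 $ 2 = b"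
  "mat2 a b c d $ 2 $ 1 = c" "mat2 a b c d $ 2 $ 2 = d"
  by (simp_all add: mat2_def)

lemma mat2_eq_iff: "mat2 a b c d = mat2 a' b' c' d' \<longleftrightarrow> a = a' \<and> b = b' \<and> c = c' \<and> d = d'"
  by (metis mat2_nth)

lemma mat2_cases: obtains a b c d where "M = mat2 a b c d"
proof
  show "M = mat2 (M$1$1) (M$1$2) (M$2$1) (M$2$2)"
    by (simp add: vec_eq_iff forall_2)
qed

lemma mat2_mult:
  fixes a b c d :: "'a::semiring_1"
  shows "mat2 a b c d ** mat2 e f g h = mat2 (a*e + b*g) (a*f + b*h) (c*e + d*g) (c*f + d*h)"
  by (simp add: vec_eq_iff forall_2 matrix_matrix_mult_def sum_2)

lemma mat2_one: "(mat 1 :: 'a::semiring_1^2^2) = mat2 1 0 0 1"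
  by (simp add: vec_eq_iff forall_2 mat_def)

lemma transpose_mat2: "transpose (mat2 a b c d) = mat2 a c b d"
  by (simp add: vec_eq_iff forall_2 transpose_def)

lemma det_mat2: "det (mat2 a b c d) = a*d - b*c"
  by (simp add: det_2)

lemma matrix_inv_mat2:
  fixes a b c d :: "'a::comm_ring_1"
  assumes "a*d - b*c = 1"
  shows "matrix_inv (mat2 a b c d) = mat2 d (-b) (-c) a"
  by (rule matrix_inv_eqI)
    (use assms in \<open>simp_all add: mat2_mult mat2_one mat2_eq_iff algebra_simps\<close>)

lemma Lm_mat2: "Lm = mat2 1 0 1 1"
  by (simp add: Lm_def mat2_def)

lemma Rm_mat2: "Rm = mat2 1 1 0 1"
  by (simp add: Rm_def mat2_def)

lemma Lm_inv_LWR_Rm: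
  assumes "det W = 1"
  shows "Lm ** matrix_inv (Lm ** W ** Rm) ** Rm = Rm ** transpose W ** Lm"
proof -
  obtain a b c d where W: "W = mat2 a b c d" by (rule mat2_cases)
  have "Lm ** W ** Rm = mat2 a (a+b) (a+c) (a+b+c+d)"
    by (simp add: W Lm_mat2 Rm_mat2 mat2_mult mat2_eq_iff algebra_simps)
  moreover have "a*d - b*c = 1" using assms by (simp add: W det_mat2)
  ultimately have "matrix_inv (Lm ** W ** Rm) = mat2 (a+b+c+d) (-(a+b)) (-(a+c)) a"
    by (simp add: matrix_inv_mat2 algebra_simps)
  then show ?thesis
    by (simp add: W Lm_mat2 Rm_mat2 transpose_mat2 mat2_mult mat2_eq_iff algebra_simps)
qed

lemma D1_mult:
  assumes "A \<in> D1" "B \<in> D1"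
  shows "A ** B \<in> D1"
proof -
  have "0 \<le> (A ** B) $ i $ j" for i j
    using assms by (simp add: D1_def matrix_matrix_mult_def sum_nonneg)
  moreover have "det (A ** B) = 1"
    using assms by (simp add: D1_def det_mul)
  ultimately show ?thesis by (simp add: D1_def)
qed

lemma D1_transpose:
  assumes "A \<in> D1"
  shows "transpose A \<in> D1"
proof -
  have "0 \<le> transpose A $ i $ j" for i j
    using assms by (simp add: D1_def transpose_def)
  moreover have "det (transpose A) = 1"
    using assms by (simp add: D1_def)
  ultimately show ?thesis by (simp add: D1_def)
qed

lemma Lm_in_D1: "Lm \<in> D1"
  by (simp add: Lm_mat2 D1_def forall_2 det_mat2)

lemma Rm_in_D1: "Rm \<in> D1"
  by (simp add: Rm_mat2 D1_def forall_2 det_mat2)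

theorem lemma8:
  assumes "W \<in> D1"
  shows "Lm ** matrix_inv (Lm ** W ** Rm) ** Rm \<in> D1
     \<and> (\<exists>U\<in>D1. Lm ** matrix_inv (Lm ** W ** Rm) ** Rm = Rm ** U)"
proof -
  have eq: "Lm ** matrix_inv (Lm ** W ** Rm) ** Rm = Rm ** (transpose W ** Lm)"
    using assms by (simp add: Lm_inv_LWR_Rm D1_def matrix_mul_assoc)
  have U: "transpose W ** Lm \<in> D1"
    using assms by (intro D1_mult D1_transpose Lm_in_D1)
  show ?thesis
    unfolding eq using U by (blast intro: D1_mult Rm_in_D1)
qed

end
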